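(* Let $S$ be a monoid and let $A\xrightarrow{f}B\xrightarrow{g}C$ be a Rees short exact sequence of right $S$-acts. Then $B_S$ is artinian (resp. noetherian, Rees artinian, Rees noetherian) if and only if both $A_S$ and $C_S$ are artinian (resp. noetherian, Rees artinian, Rees noetherian).
   Context: A sequence $A\xrightarrow{f}B\xrightarrow{g}C$ of $S$-act homomorphisms is a Rees short exact sequence if $f$ is injective, $g$ is surjective, and $\ker g=\mathcal K_{\mathrm{Im} f}$, where $\ker g=\{(b,b'):g(b)=g(b')\}$ and $\mathcal K_{\mathrm{Im}f}=(f(A)\times f(A))\cup\Delta_B$ with $\Delta_B=\{(b,b):b\in B\}$. A right $S$-act is artinian (noetherian) if its lattice of congruences satisfies the descending (ascending) chain condition; Rees artinian (Rees noetherian) if its subacts satisfy the descending (ascending) chain condition. *)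

theory Defs
  imports Main
begin

definition right_act :: "'a set \<Rightarrow> ('a \<Rightarrow> 's::monoid_mult \<Rightarrow> 'a) \<Rightarrow> bool" where
  "right_act X act \<longleftrightarrow>
     (\<forall>x\<in>X. \<forall>s. act x s \<in> X) \<and>
     (\<forall>x\<in>X. act x 1 = x) \<and>
     (\<forall>x\<in>X. \<forall>s t. act (act x s) t = act x (s * t))"

definition act_hom :: "'a set \<Rightarrow> ('a \<Rightarrow> 's::monoid_mult \<Rightarrow> 'a) \<Rightarrow> 'b set \<Rightarrow> ('b \<Rightarrow> 's \<Rightarrow> 'b) \<Rightarrow> ('a \<Rightarrow> 'b) \<Rightarrow> bool" where
  "act_hom X actX Y actY h \<longleftrightarrow>
     (\<forall>x\<in>X. h x \<in> Y) \<and> (\<forall>x\<in>X. \<forall>s. h (actX x s) = actY (h x) s)"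

definition act_congruence :: "'a set \<Rightarrow> ('a \<Rightarrow> 's::monoid_mult \<Rightarrow> 'a) \<Rightarrow> ('a \<times> 'a) set \<Rightarrow> bool" where
  "act_congruence X act \<rho> \<longleftrightarrow>
     equiv X \<rho> \<and> (\<forall>(x, y)\<in>\<rho>. \<forall>s. (act x s, act y s) \<in> \<rho>)"

definition subact :: "'a set \<Rightarrow> ('a \<Rightarrow> 's::monoid_mult \<Rightarrow> 'a) \<Rightarrow> 'a set \<Rightarrow> bool" where
  "subact X act Y \<longleftrightarrow> Y \<subseteq> X \<and> (\<forall>y\<in>Y. \<forall>s. act y s \<in> Y)"

definition dcc_on :: "('x set \<Rightarrow> bool) \<Rightarrow> bool" where
  "dcc_on P \<longleftrightarrow> (\<forall>c::nat \<Rightarrow> 'x set. (\<forall>n. P (c n)) \<and> (\<forall>n. c (Suc n) \<subseteq> c n)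
       \<longrightarrow> (\<exists>N. \<forall>m\<ge>N. c m = c N))"

definition acc_on :: "('x set \<Rightarrow> bool) \<Rightarrow> bool" where
  "acc_on P \<longleftrightarrow> (\<forall>c::nat \<Rightarrow> 'x set. (\<forall>n. P (c n)) \<and> (\<forall>n. c n \<subseteq> c (Suc n))
       \<longrightarrow> (\<exists>N. \<forall>m\<ge>N. c m = c N))"

definition act_artinian :: "'a set \<Rightarrow> ('a \<Rightarrow> 's::monoid_mult \<Rightarrow> 'a) \<Rightarrow> bool" where
  "act_artinian X act \<longleftrightarrow> dcc_on (act_congruence X act)"

definition act_noetherian :: "'a set \<Rightarrow> ('a \<Rightarrow> 's::monoid_mult \<Rightarrow> 'a) \<Rightarrow> bool" where
  "act_noetherian X act \<longleftrightarrow> acc_on (act_congruence X act)"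

definition rees_artinian :: "'a set \<Rightarrow> ('a \<Rightarrow> 's::monoid_mult \<Rightarrow> 'a) \<Rightarrow> bool" where
  "rees_artinian X act \<longleftrightarrow> dcc_on (subact X act)"

definition rees_noetherian :: "'a set \<Rightarrow> ('a \<Rightarrow> 's::monoid_mult \<Rightarrow> 'a) \<Rightarrow> bool" where
  "rees_noetherian X act \<longleftrightarrow> acc_on (subact X act)"

definition rees_ses ::
  "'a set \<Rightarrow> ('a \<Rightarrow> 's::monoid_mult \<Rightarrow> 'a) \<Rightarrow> 'b set \<Rightarrow> ('b \<Rightarrow> 's \<Rightarrow> 'b) \<Rightarrow>
   'c set \<Rightarrow> ('c \<Rightarrow> 's \<Rightarrow> 'c) \<Rightarrow> ('a \<Rightarrow> 'b) \<Rightarrow> ('b \<Rightarrow> 'c) \<Rightarrow> bool" where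
  "rees_ses A actA B actB C actC f g \<longleftrightarrow>
     act_hom A actA B actB f \<and> act_hom B actB C actC g \<and>
     inj_on f A \<and> g ` B = C \<and>
     {(b, b'). b \<in> B \<and> b' \<in> B \<and> g b = g b'} = (f ` A \<times> f ` A) \<union> Id_on B"

end

theory Submission
  imports Defs
begin

text \<open>
  A chain condition on a family of sets is well-foundedness of strict inclusion on it. It is
  therefore inherited along monotone injective maps, and by a family that two monotone maps
  send into well-founded families while jointly separating comparable members (use the
  lexicographic product). Subacts and congruences of \<open>A\<close> and \<open>C\<close> embed into those of \<open>B\<close>
  via \<open>f\<close>-images and \<open>g\<close>-preimages. Conversely a subact \<open>X\<close> of \<open>B\<close> is traced by
  \<open>f\<^sup>-\<^sup>1(X)\<close> and \<open>g(X)\<close>, and a congruence \<open>\<rho>\<close> on \<open>B\<close> by its restriction to \<open>A\<close> and by the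
  image in \<open>C\<close> of \<open>\<rho> \<or> \<K>\<^bsub>Im f\<^esub>\<close>. Because \<open>ker g = \<K>\<^bsub>Im f\<^esub>\<close>, comparable subacts
  or congruences with equal traces coincide.
\<close>

definition strict_subset_on :: "('x set \<Rightarrow> bool) \<Rightarrow> ('x set \<times> 'x set) set" where
  "strict_subset_on P = {(X, Y). P X \<and> P Y \<and> X \<subset> Y}"

lemma dcc_on_iff_wf: "dcc_on P \<longleftrightarrow> wf (strict_subset_on P)"
proof
  assume dcc: "dcc_on P"
  show "wf (strict_subset_on P)"
    unfolding wf_iff_no_infinite_down_chain
  proof
    assume "\<exists>c. \<forall>i. (c (Suc i), c i) \<in> strict_subset_on P"
    then obtain c where "\<forall>i. (c (Suc i), c i) \<in> strict_subset_on P" ..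
    then have P: "\<And>i. P (c i)" and desc: "\<And>i. c (Suc i) \<subset> c i"
      unfolding strict_subset_on_def by auto
    then obtain N where "\<forall>m\<ge>N. c m = c N"
      using dcc unfolding dcc_on_def by (meson psubset_imp_subset)
    then show False
      using desc[of N] by (metis le_SucI order_refl psubset_eq)
  qed
next
  assume wf: "wf (strict_subset_on P)"
  show "dcc_on P"
    unfolding dcc_on_def
  proof (intro allI impI)
    fix c :: "nat \<Rightarrow> _"
    assume "(\<forall>n. P (c n)) \<and> (\<forall>n. c (Suc n) \<subseteq> c n)"
    then have P: "\<And>n. P (c n)" and desc: "\<And>n. c (Suc n) \<subseteq> c n" by auto
    obtain N where "c N \<in> range c"
      and minimal: "\<And>Y. (Y, c N) \<in> strict_subset_on P \<Longrightarrow> Y \<notin> range c"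
      using wfE_min[OF wf, of "c 0" "range c"] by blast
    have "c m = c N" if "m \<ge> N" for m
      using minimal[of "c m"] lift_Suc_antimono_le[of c, OF desc that] P
      unfolding strict_subset_on_def by blast
    then show "\<exists>N. \<forall>m\<ge>N. c m = c N" by blast
  qed
qed

lemma acc_on_iff_wf: "acc_on P \<longleftrightarrow> wf ((strict_subset_on P)\<inverse>)"
proof
  assume acc: "acc_on P"
  show "wf ((strict_subset_on P)\<inverse>)"
    unfolding wf_iff_no_infinite_down_chain
  proof
    assume "\<exists>c. \<forall>i. (c (Suc i), c i) \<in> (strict_subset_on P)\<inverse>"
    then obtain c where "\<forall>i. (c (Suc i), c i) \<in> (strict_subset_on P)\<inverse>" ..
    then have P: "\<And>i. P (c i)" and asc: "\<And>i. c i \<subset> c (Suc i)"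
      unfolding strict_subset_on_def by auto
    then obtain N where "\<forall>m\<ge>N. c m = c N"
      using acc unfolding acc_on_def by (meson psubset_imp_subset)
    then show False
      using asc[of N] by (metis le_SucI order_refl psubset_eq)
  qed
next
  assume wf: "wf ((strict_subset_on P)\<inverse>)"
  show "acc_on P"
    unfolding acc_on_def
  proof (intro allI impI)
    fix c :: "nat \<Rightarrow> _"
    assume "(\<forall>n. P (c n)) \<and> (\<forall>n. c n \<subseteq> c (Suc n))"
    then have P: "\<And>n. P (c n)" and asc: "\<And>n. c n \<subseteq> c (Suc n)" by auto
    obtain N where "c N \<in> range c"
      and maximal: "\<And>Y. (Y, c N) \<in> (strict_subset_on P)\<inverse> \<Longrightarrow> Y \<notin> range c"
      using wfE_min[OF wf, of "c 0" "range c"] by blast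
    have "c m = c N" if "m \<ge> N" for m
      using maximal[of "c m"] lift_Suc_mono_le[of c, OF asc that] P
      unfolding strict_subset_on_def by blast
    then show "\<exists>N. \<forall>m\<ge>N. c m = c N" by blast
  qed
qed

lemma dcc_on_pair:
  assumes "dcc_on Q1" and "dcc_on Q2"
    and "\<And>X. P X \<Longrightarrow> Q1 (h1 X)" and "\<And>X. P X \<Longrightarrow> Q2 (h2 X)"
    and "\<And>X Y. P X \<Longrightarrow> P Y \<Longrightarrow> X \<subseteq> Y \<Longrightarrow> h1 X \<subseteq> h1 Y"
    and "\<And>X Y. P X \<Longrightarrow> P Y \<Longrightarrow> X \<subseteq> Y \<Longrightarrow> h2 X \<subseteq> h2 Y"
    and "\<And>X Y. P X \<Longrightarrow> P Y \<Longrightarrow> X \<subseteq> Y \<Longrightarrow> h1 X = h1 Y \<Longrightarrow> h2 X = h2 Y \<Longrightarrow> X = Y"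
  shows "dcc_on P"
  unfolding dcc_on_iff_wf
proof (rule wf_subset)
  let ?R = "inv_image (strict_subset_on Q1 <*lex*> strict_subset_on Q2) (\<lambda>X. (h1 X, h2 X))"
  show "wf ?R"
    using assms(1,2) unfolding dcc_on_iff_wf by blast
  show "strict_subset_on P \<subseteq> ?R"
    by (auto simp: strict_subset_on_def assms(3-6) psubset_eq) (use assms(7) in blast)
qed

lemma acc_on_pair:
  assumes "acc_on Q1" and "acc_on Q2"
    and "\<And>X. P X \<Longrightarrow> Q1 (h1 X)" and "\<And>X. P X \<Longrightarrow> Q2 (h2 X)"
    and "\<And>X Y. P X \<Longrightarrow> P Y \<Longrightarrow> X \<subseteq> Y \<Longrightarrow> h1 X \<subseteq> h1 Y"
    and "\<And>X Y. P X \<Longrightarrow> P Y \<Longrightarrow> X \<subseteq> Y \<Longrightarrow> h2 X \<subseteq> h2 Y"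
    and "\<And>X Y. P X \<Longrightarrow> P Y \<Longrightarrow> X \<subseteq> Y \<Longrightarrow> h1 X = h1 Y \<Longrightarrow> h2 X = h2 Y \<Longrightarrow> X = Y"
  shows "acc_on P"
  unfolding acc_on_iff_wf
proof (rule wf_subset)
  let ?R = "inv_image ((strict_subset_on Q1)\<inverse> <*lex*> (strict_subset_on Q2)\<inverse>) (\<lambda>X. (h1 X, h2 X))"
  show "wf ?R"
    using assms(1,2) unfolding acc_on_iff_wf by blast
  show "(strict_subset_on P)\<inverse> \<subseteq> ?R"
    by (auto simp: strict_subset_on_def assms(3-6) psubset_eq) (use assms(7) in blast)
qed

lemma dcc_on_transfer:
  assumes "dcc_on Q" and "\<And>X. P X \<Longrightarrow> Q (h X)"
    and "\<And>X Y. P X \<Longrightarrow> P Y \<Longrightarrow> X \<subseteq> Y \<Longrightarrow> h X \<subseteq> h Y"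
    and "\<And>X Y. P X \<Longrightarrow> P Y \<Longrightarrow> h X = h Y \<Longrightarrow> X = Y"
  shows "dcc_on P"
  by (rule dcc_on_pair[of Q Q P h h]) (use assms in blast)+

lemma acc_on_transfer:
  assumes "acc_on Q" and "\<And>X. P X \<Longrightarrow> Q (h X)"
    and "\<And>X Y. P X \<Longrightarrow> P Y \<Longrightarrow> X \<subseteq> Y \<Longrightarrow> h X \<subseteq> h Y"
    and "\<And>X Y. P X \<Longrightarrow> P Y \<Longrightarrow> h X = h Y \<Longrightarrow> X = Y"
  shows "acc_on P"
  by (rule acc_on_pair[of Q Q P h h]) (use assms in blast)+

lemma act_congruenceI:
  assumes "\<rho> \<subseteq> X \<times> X" and "\<And>x. x \<in> X \<Longrightarrow> (x, x) \<in> \<rho>"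
    and "\<And>x y. (x, y) \<in> \<rho> \<Longrightarrow> (y, x) \<in> \<rho>"
    and "\<And>x y z. (x, y) \<in> \<rho> \<Longrightarrow> (y, z) \<in> \<rho> \<Longrightarrow> (x, z) \<in> \<rho>"
    and "\<And>x y s. (x, y) \<in> \<rho> \<Longrightarrow> (act x s, act y s) \<in> \<rho>"
  shows "act_congruence X act \<rho>"
  unfolding act_congruence_def
  by (intro conjI equivI refl_onI symI transI ballI allI assms(1))
    (auto intro: assms(2-5))

lemma act_congruenceD:
  assumes "act_congruence X act \<rho>"
  shows act_congruence_subset: "\<rho> \<subseteq> X \<times> X"
    and act_congruence_refl: "x \<in> X \<Longrightarrow> (x, x) \<in> \<rho>"
    and act_congruence_sym: "(x, y) \<in> \<rho> \<Longrightarrow> (y, x) \<in> \<rho>"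
    and act_congruence_trans: "(x, y) \<in> \<rho> \<Longrightarrow> (y, z) \<in> \<rho> \<Longrightarrow> (x, z) \<in> \<rho>"
    and act_congruence_compat: "(x, y) \<in> \<rho> \<Longrightarrow> (act x s, act y s) \<in> \<rho>"
  using assms unfolding act_congruence_def equiv_def refl_on_def sym_def trans_def by blast+

lemma subact_carrier: "right_act X act \<Longrightarrow> subact X act X"
  unfolding right_act_def subact_def by blast

lemma subact_image:
  "act_hom X actX Y actY h \<Longrightarrow> subact X actX Z \<Longrightarrow> subact Y actY (h ` Z)"
  unfolding act_hom_def subact_def by (auto, metis image_eqI subsetD)

lemma subact_vimage:
  "right_act X actX \<Longrightarrow> act_hom X actX Y actY h \<Longrightarrow> subact Y actY W \<Longrightarrow>
   subact X actX (X \<inter> h -` W)"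
  unfolding right_act_def act_hom_def subact_def by auto

lemma act_congruence_inv_image:
  assumes "right_act X actX" and "act_hom X actX Y actY h" and "act_congruence Y actY \<rho>"
  shows "act_congruence X actX (inv_image \<rho> h \<inter> X \<times> X)"
  using assms unfolding right_act_def act_hom_def
  by (intro act_congruenceI)
    (auto intro: act_congruence_refl act_congruence_sym act_congruence_trans
      act_congruence_compat)

lemma act_congruence_image_inj:
  assumes "right_act Y actY" and "act_hom X actX Y actY h" and "inj_on h X"
    and \<sigma>: "act_congruence X actX \<sigma>"
  shows "act_congruence Y actY (map_prod h h ` \<sigma> \<union> Id_on Y)" (is "act_congruence Y actY ?\<kappa>")
proof -
  have \<sigma>X: "\<sigma> \<subseteq> X \<times> X" using act_congruence_subset[OF \<sigma>] .
  have mem: "(u, v) \<in> ?\<kappa> \<longleftrightarrow> (\<exists>a a'. (a, a') \<in> \<sigma> \<and> u = h a \<and> v = h a') \<or> (u = v \<and> u \<in> Y)"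
    for u v by force
  show ?thesis
  proof (rule act_congruenceI)
    show "?\<kappa> \<subseteq> Y \<times> Y"
      using \<sigma>X assms(2) unfolding act_hom_def by auto
    show "(y, y) \<in> ?\<kappa>" if "y \<in> Y" for y
      using that by blast
    show "(v, u) \<in> ?\<kappa>" if "(u, v) \<in> ?\<kappa>" for u v
      using that act_congruence_sym[OF \<sigma>] unfolding mem by blast
    show "(u, w) \<in> ?\<kappa>" if uvw: "(u, v) \<in> ?\<kappa>" "(v, w) \<in> ?\<kappa>" for u v w
    proof (cases "u = v \<or> v = w")
      case True
      then show ?thesis using uvw by blast
    next
      case False
      then obtain a a' b b' where
        "(a, a') \<in> \<sigma>" "(b, b') \<in> \<sigma>" "u = h a" "v = h a'" "v = h b" "w = h b'"
        using uvw unfolding mem by blast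
      moreover have "a' = b"
        using calculation \<sigma>X inj_onD[OF assms(3)] by blast
      ultimately show ?thesis
        using act_congruence_trans[OF \<sigma>] unfolding mem by blast
    qed
    show "(actY u s, actY v s) \<in> ?\<kappa>" if uv: "(u, v) \<in> ?\<kappa>" for u v s
    proof (cases "u = v \<and> u \<in> Y")
      case True
      then show ?thesis using assms(1) unfolding mem right_act_def by blast
    next
      case False
      then obtain a a' where aa': "(a, a') \<in> \<sigma>" "u = h a" "v = h a'"
        using uv unfolding mem by blast
      then have "actY u s = h (actX a s)" "actY v s = h (actX a' s)"
        using \<sigma>X assms(2) unfolding act_hom_def by auto
      then show ?thesis
        using act_congruence_compat[OF \<sigma> aa'(1)] unfolding mem by blast
    qed
  qed
qed

lemma inv_image_image_inj:
  assumes "inj_on h X" and \<sigma>: "act_congruence X act \<sigma>"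
  shows "inv_image (map_prod h h ` \<sigma> \<union> Id_on Y) h \<inter> X \<times> X = \<sigma>"
proof
  show "\<sigma> \<subseteq> inv_image (map_prod h h ` \<sigma> \<union> Id_on Y) h \<inter> X \<times> X"
    using act_congruence_subset[OF \<sigma>] by force
  show "inv_image (map_prod h h ` \<sigma> \<union> Id_on Y) h \<inter> X \<times> X \<subseteq> \<sigma>"
  proof clarify
    fix x y
    assume xy: "x \<in> X" "y \<in> X" and "(x, y) \<in> inv_image (map_prod h h ` \<sigma> \<union> Id_on Y) h"
    then consider a a' where "(a, a') \<in> \<sigma>" "h x = h a" "h y = h a'" | "h x = h y"
      by auto
    then show "(x, y) \<in> \<sigma>"
    proof cases
      case 1
      then have "a \<in> X" "a' \<in> X" using act_congruence_subset[OF \<sigma>] by auto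
      then show ?thesis using 1 xy inj_onD[OF assms(1)] by metis
    next
      case 2
      then show ?thesis using xy inj_onD[OF assms(1)] act_congruence_refl[OF \<sigma>] by metis
    qed
  qed
qed

lemma act_congruence_image_surj:
  assumes "act_hom X actX Y actY h" and "h ` X = Y" and "act_congruence X actX \<rho>"
    and "{(x, x'). x \<in> X \<and> x' \<in> X \<and> h x = h x'} \<subseteq> \<rho>"
  shows "act_congruence Y actY (map_prod h h ` \<rho>)"
proof (rule act_congruenceI)
  have \<rho>X: "\<rho> \<subseteq> X \<times> X" using act_congruence_subset[OF assms(3)] .
  note ker = subsetD[OF assms(4)]
  show "map_prod h h ` \<rho> \<subseteq> Y \<times> Y" using \<rho>X assms(2) by auto
  show "(y, y) \<in> map_prod h h ` \<rho>" if "y \<in> Y" for y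
    using that assms(2) act_congruence_refl[OF assms(3)] by force
  show "(y, x) \<in> map_prod h h ` \<rho>" if "(x, y) \<in> map_prod h h ` \<rho>" for x y
    using that act_congruence_sym[OF assms(3)] by force
  show "(x, z) \<in> map_prod h h ` \<rho>"
    if xy: "(x, y) \<in> map_prod h h ` \<rho>" and yz: "(y, z) \<in> map_prod h h ` \<rho>" for x y z
  proof -
    obtain u v where uv: "(u, v) \<in> \<rho>" "x = h u" "y = h v" using xy by auto
    obtain v' w where vw: "(v', w) \<in> \<rho>" "y = h v'" "z = h w" using yz by auto
    have "(v, v') \<in> \<rho>" using ker \<rho>X uv vw by blast
    then have "(u, w) \<in> \<rho>" using act_congruence_trans[OF assms(3)] uv(1) vw(1) by blast
    then show ?thesis using uv vw by force
  qed
  show "(actY x s, actY y s) \<in> map_prod h h ` \<rho>" if xy: "(x, y) \<in> map_prod h h ` \<rho>" for x y s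
  proof -
    obtain u v where uv: "(u, v) \<in> \<rho>" "x = h u" "y = h v" using xy by auto
    then have "actY x s = h (actX u s)" "actY y s = h (actX v s)"
      using \<rho>X assms(1) unfolding act_hom_def by auto
    then show ?thesis using act_congruence_compat[OF assms(3) uv(1)] by force
  qed
qed

lemma inv_image_image_kernel_subset:
  assumes \<rho>: "act_congruence X act \<rho>"
    and kernel: "{(x, x'). x \<in> X \<and> x' \<in> X \<and> h x = h x'} \<subseteq> \<rho>"
  shows "inv_image (map_prod h h ` \<rho>) h \<inter> X \<times> X = \<rho>"
proof
  show "\<rho> \<subseteq> inv_image (map_prod h h ` \<rho>) h \<inter> X \<times> X"
    using act_congruence_subset[OF \<rho>] by force
  show "inv_image (map_prod h h ` \<rho>) h \<inter> X \<times> X \<subseteq> \<rho>"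
  proof clarify
    fix x y
    assume xy: "x \<in> X" "y \<in> X" and "(x, y) \<in> inv_image (map_prod h h ` \<rho>) h"
    then obtain u v where uv: "(u, v) \<in> \<rho>" "h x = h u" "h y = h v" by auto
    then have "u \<in> X" "v \<in> X" using act_congruence_subset[OF \<rho>] by auto
    then have "(x, u) \<in> \<rho>" "(v, y) \<in> \<rho>" using kernel xy uv by auto
    then show "(x, y) \<in> \<rho>" using act_congruence_trans[OF \<rho>] uv(1) by blast
  qed
qed

lemma image_inv_image_surj:
  assumes "h ` X = Y" and "\<sigma> \<subseteq> Y \<times> Y"
  shows "map_prod h h ` (inv_image \<sigma> h \<inter> X \<times> X) = \<sigma>"
proof
  show "map_prod h h ` (inv_image \<sigma> h \<inter> X \<times> X) \<subseteq> \<sigma>" by auto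
  show "\<sigma> \<subseteq> map_prod h h ` (inv_image \<sigma> h \<inter> X \<times> X)"
  proof clarify
    fix u v assume uv: "(u, v) \<in> \<sigma>"
    then obtain x y where "x \<in> X" "y \<in> X" "u = h x" "v = h y" using assms by blast
    then show "(u, v) \<in> map_prod h h ` (inv_image \<sigma> h \<inter> X \<times> X)" using uv by force
  qed
qed

lemma subact_Image:
  assumes \<rho>: "act_congruence X act \<rho>" and T: "subact X act T"
  shows "subact X act (\<rho> `` T)"
  unfolding subact_def
proof (intro conjI ballI allI)
  show "\<rho> `` T \<subseteq> X" using act_congruence_subset[OF \<rho>] by blast
  show "act y s \<in> \<rho> `` T" if "y \<in> \<rho> `` T" for y s
  proof -
    obtain t where "t \<in> T" "(t, y) \<in> \<rho>" using \<open>y \<in> \<rho> `` T\<close> by blast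
    then show ?thesis using T act_congruence_compat[OF \<rho>] unfolding subact_def by blast
  qed
qed

lemma act_congruence_union_saturated:
  assumes \<rho>: "act_congruence X act \<rho>" and T: "subact X act T" and saturated: "\<rho> `` T \<subseteq> T"
  shows "act_congruence X act (\<rho> \<union> T \<times> T)"
proof (rule act_congruenceI)
  show "\<rho> \<union> T \<times> T \<subseteq> X \<times> X"
    using act_congruence_subset[OF \<rho>] T unfolding subact_def by blast
  show "(x, x) \<in> \<rho> \<union> T \<times> T" if "x \<in> X" for x
    using act_congruence_refl[OF \<rho> that] by blast
  show "(y, x) \<in> \<rho> \<union> T \<times> T" if "(x, y) \<in> \<rho> \<union> T \<times> T" for x y
    using that act_congruence_sym[OF \<rho>] by blast
  show "(x, z) \<in> \<rho> \<union> T \<times> T"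
    if "(x, y) \<in> \<rho> \<union> T \<times> T" and "(y, z) \<in> \<rho> \<union> T \<times> T" for x y z
    using that act_congruence_trans[OF \<rho>] act_congruence_sym[OF \<rho>] saturated by blast
  show "(act x s, act y s) \<in> \<rho> \<union> T \<times> T" if "(x, y) \<in> \<rho> \<union> T \<times> T" for x y s
    using that act_congruence_compat[OF \<rho>] T unfolding subact_def by blast
qed

locale rees_exact =
  fixes A :: "'a set" and actA :: "'a \<Rightarrow> 's::monoid_mult \<Rightarrow> 'a"
    and B :: "'b set" and actB :: "'b \<Rightarrow> 's \<Rightarrow> 'b"
    and C :: "'c set" and actC :: "'c \<Rightarrow> 's \<Rightarrow> 'c"
    and f :: "'a \<Rightarrow> 'b" and g :: "'b \<Rightarrow> 'c"
  assumes right_act_A: "right_act A actA" and right_act_B: "right_act B actB"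
    and exact: "rees_ses A actA B actB C actC f g"
begin

lemma hom_f: "act_hom A actA B actB f"
  and hom_g: "act_hom B actB C actC g"
  and inj_f: "inj_on f A"
  and surj_g: "g ` B = C"
  and kernel_g: "{(b, b'). b \<in> B \<and> b' \<in> B \<and> g b = g b'} = f ` A \<times> f ` A \<union> Id_on B"
  using exact unfolding rees_ses_def by blast+

lemma image_g_vimage: "D \<subseteq> C \<Longrightarrow> g ` (B \<inter> g -` D) = D"
  using surj_g by blast

text \<open>The join \<open>\<rho> \<or> \<K>\<^bsub>Im f\<^esub>\<close>; saturating \<open>f(A)\<close> under \<open>\<rho>\<close> is what makes the union
  transitive.\<close>

definition rees_join :: "('b \<times> 'b) set \<Rightarrow> ('b \<times> 'b) set" where
  "rees_join \<rho> = \<rho> \<union> (\<rho> `` f ` A) \<times> (\<rho> `` f ` A)"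

lemma kernel_g_subset_rees_join:
  assumes "act_congruence B actB \<rho>"
  shows "{(b, b'). b \<in> B \<and> b' \<in> B \<and> g b = g b'} \<subseteq> rees_join \<rho>"
proof -
  have "f ` A \<subseteq> \<rho> `` f ` A"
    using act_congruence_refl[OF assms] hom_f unfolding act_hom_def by blast
  then show ?thesis unfolding kernel_g rees_join_def
    using act_congruence_refl[OF assms] by blast
qed

lemma act_congruence_rees_join:
  assumes "act_congruence B actB \<rho>"
  shows "act_congruence B actB (rees_join \<rho>)"
  unfolding rees_join_def
proof (rule act_congruence_union_saturated[OF assms])
  show "subact B actB (\<rho> `` f ` A)"
    by (intro subact_Image[OF assms] subact_image[OF hom_f] subact_carrier right_act_A)
  show "\<rho> `` (\<rho> `` f ` A) \<subseteq> \<rho> `` f ` A"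
    using act_congruence_trans[OF assms] by blast
qed

definition restrict_congruence :: "('b \<times> 'b) set \<Rightarrow> ('a \<times> 'a) set" where
  "restrict_congruence \<rho> = inv_image \<rho> f \<inter> A \<times> A"

definition induced_congruence :: "('b \<times> 'b) set \<Rightarrow> ('c \<times> 'c) set" where
  "induced_congruence \<rho> = map_prod g g ` rees_join \<rho>"

lemma act_congruence_restrict:
  "act_congruence B actB \<rho> \<Longrightarrow> act_congruence A actA (restrict_congruence \<rho>)"
  unfolding restrict_congruence_def by (rule act_congruence_inv_image[OF right_act_A hom_f])

lemma act_congruence_induced:
  "act_congruence B actB \<rho> \<Longrightarrow> act_congruence C actC (induced_congruence \<rho>)"
  unfolding induced_congruence_def
  by (intro act_congruence_image_surj[OF hom_g surj_g] act_congruence_rees_join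
      kernel_g_subset_rees_join)

lemma subact_eq_if_traces_eq:
  assumes "subact B actB X" and "subact B actB Y" and "X \<subseteq> Y"
    and "A \<inter> f -` X = A \<inter> f -` Y" and "g ` X = g ` Y"
  shows "X = Y"
proof -
  have "y \<in> X" if "y \<in> Y" for y
  proof -
    obtain x where x: "x \<in> X" "g x = g y" using assms(5) \<open>y \<in> Y\<close> by (metis imageE imageI)
    then have "(x, y) \<in> f ` A \<times> f ` A \<union> Id_on B"
      using assms(1,2) \<open>y \<in> Y\<close> unfolding subact_def kernel_g[symmetric] by blast
    then show "y \<in> X" using x assms(4) \<open>y \<in> Y\<close> by blast
  qed
  then show ?thesis using assms(3) by blast
qed

lemma act_congruence_eq_if_traces_eq:
  assumes \<rho>: "act_congruence B actB \<rho>" and \<rho>': "act_congruence B actB \<rho>'" and "\<rho> \<subseteq> \<rho>'"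
    and "restrict_congruence \<rho> = restrict_congruence \<rho>'"
    and "induced_congruence \<rho> = induced_congruence \<rho>'"
  shows "\<rho> = \<rho>'"
proof -
  have restrict_eq: "inv_image \<rho> f \<inter> A \<times> A = inv_image \<rho>' f \<inter> A \<times> A"
    and quotient_eq: "map_prod g g ` rees_join \<rho> = map_prod g g ` rees_join \<rho>'"
    using assms(4,5) unfolding restrict_congruence_def induced_congruence_def .
  have "(b, c) \<in> \<rho>" if bc: "(b, c) \<in> \<rho>'" for b c
  proof -
    have "(b, c) \<in> rees_join \<rho>'" using bc unfolding rees_join_def by blast
    then have "(g b, g c) \<in> map_prod g g ` rees_join \<rho>"
      unfolding quotient_eq by (rule rev_image_eqI) simp
    moreover have "b \<in> B" "c \<in> B" using bc act_congruence_subset[OF \<rho>'] by auto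
    ultimately have "(b, c) \<in> inv_image (map_prod g g ` rees_join \<rho>) g \<inter> B \<times> B" by simp
    then have "(b, c) \<in> rees_join \<rho>"
      unfolding inv_image_image_kernel_subset[OF act_congruence_rees_join[OF \<rho>]
          kernel_g_subset_rees_join[OF \<rho>]] .
    then consider "(b, c) \<in> \<rho>"
      | a1 a2 where "a1 \<in> A" "a2 \<in> A" "(f a1, b) \<in> \<rho>" "(f a2, c) \<in> \<rho>"
      unfolding rees_join_def by blast
    then show ?thesis
    proof cases
      case 2
      have "(f a1, c) \<in> \<rho>'"
        using act_congruence_trans[OF \<rho>'] 2(3) bc \<open>\<rho> \<subseteq> \<rho>'\<close> by blast
      moreover have "(c, f a2) \<in> \<rho>'"
        using act_congruence_sym[OF \<rho>'] 2(4) \<open>\<rho> \<subseteq> \<rho>'\<close> by blast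
      ultimately have "(a1, a2) \<in> inv_image \<rho>' f \<inter> A \<times> A"
        using act_congruence_trans[OF \<rho>'] 2(1,2) by simp
      then have "(f a1, f a2) \<in> \<rho>" unfolding restrict_eq[symmetric] by simp
      then have "(b, f a2) \<in> \<rho>"
        by (rule act_congruence_trans[OF \<rho> act_congruence_sym[OF \<rho> 2(3)]])
      then show ?thesis
        by (rule act_congruence_trans[OF \<rho> _ 2(4)])
    qed
  qed
  then show ?thesis using \<open>\<rho> \<subseteq> \<rho>'\<close> by auto
qed

lemma image_f_inj_on_subacts:
  "subact A actA Y \<Longrightarrow> subact A actA Z \<Longrightarrow> f ` Y = f ` Z \<Longrightarrow> Y = Z"
  unfolding subact_def using inj_on_image_eq_iff[OF inj_f] by blast

lemma vimage_g_inj_on_subacts: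
  "subact C actC D \<Longrightarrow> subact C actC D' \<Longrightarrow> B \<inter> g -` D = B \<inter> g -` D' \<Longrightarrow> D = D'"
  unfolding subact_def by (metis image_g_vimage)

lemma extend_f_inj_on_congruences:
  "act_congruence A actA \<sigma> \<Longrightarrow> act_congruence A actA \<sigma>' \<Longrightarrow>
   map_prod f f ` \<sigma> \<union> Id_on B = map_prod f f ` \<sigma>' \<union> Id_on B \<Longrightarrow> \<sigma> = \<sigma>'"
  by (metis inv_image_image_inj[OF inj_f])

lemma vimage_g_inj_on_congruences:
  "act_congruence C actC \<sigma> \<Longrightarrow> act_congruence C actC \<sigma>' \<Longrightarrow>
   inv_image \<sigma> g \<inter> B \<times> B = inv_image \<sigma>' g \<inter> B \<times> B \<Longrightarrow> \<sigma> = \<sigma>'"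
  by (metis image_inv_image_surj[OF surj_g] act_congruence_subset)

lemma rees_artinian_iff: "rees_artinian B actB \<longleftrightarrow> rees_artinian A actA \<and> rees_artinian C actC"
  unfolding rees_artinian_def
proof (intro iffI conjI)
  assume B: "dcc_on (subact B actB)"
  show "dcc_on (subact A actA)"
    by (rule dcc_on_transfer[OF B subact_image[OF hom_f]
          _ image_f_inj_on_subacts])
      (blast intro: image_mono)+
  show "dcc_on (subact C actC)"
    by (rule dcc_on_transfer[OF B subact_vimage[OF right_act_B hom_g]
          _ vimage_g_inj_on_subacts])
      (blast intro: image_mono)+
next
  assume "dcc_on (subact A actA) \<and> dcc_on (subact C actC)"
  then show "dcc_on (subact B actB)"
    by (elim conjE dcc_on_pair[of "subact A actA" "subact C actC" "subact B actB"
          "\<lambda>X. A \<inter> f -` X" "image g",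
        OF _ _ subact_vimage[OF right_act_A hom_f] subact_image[OF hom_g]
          _ _ subact_eq_if_traces_eq])
      (blast intro: image_mono)+
qed

lemma rees_noetherian_iff: "rees_noetherian B actB \<longleftrightarrow> rees_noetherian A actA \<and> rees_noetherian C actC"
  unfolding rees_noetherian_def
proof (intro iffI conjI)
  assume B: "acc_on (subact B actB)"
  show "acc_on (subact A actA)"
    by (rule acc_on_transfer[OF B subact_image[OF hom_f]
          _ image_f_inj_on_subacts])
      (blast intro: image_mono)+
  show "acc_on (subact C actC)"
    by (rule acc_on_transfer[OF B subact_vimage[OF right_act_B hom_g]
          _ vimage_g_inj_on_subacts])
      (blast intro: image_mono)+
next
  assume "acc_on (subact A actA) \<and> acc_on (subact C actC)"
  then show "acc_on (subact B actB)"
    by (elim conjE acc_on_pair[of "subact A actA" "subact C actC" "subact B actB"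
          "\<lambda>X. A \<inter> f -` X" "image g",
        OF _ _ subact_vimage[OF right_act_A hom_f] subact_image[OF hom_g]
          _ _ subact_eq_if_traces_eq])
      (blast intro: image_mono)+
qed

lemma act_artinian_iff: "act_artinian B actB \<longleftrightarrow> act_artinian A actA \<and> act_artinian C actC"
  unfolding act_artinian_def
proof (intro iffI conjI)
  assume B: "dcc_on (act_congruence B actB)"
  show "dcc_on (act_congruence A actA)"
    by (rule dcc_on_transfer[OF B act_congruence_image_inj[OF right_act_B hom_f inj_f]
          _ extend_f_inj_on_congruences])
      auto
  show "dcc_on (act_congruence C actC)"
    by (rule dcc_on_transfer[OF B act_congruence_inv_image[OF right_act_B hom_g]
          _ vimage_g_inj_on_congruences])
      auto
next
  assume "dcc_on (act_congruence A actA) \<and> dcc_on (act_congruence C actC)"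
  then show "dcc_on (act_congruence B actB)"
    by (elim conjE dcc_on_pair[of "act_congruence A actA" "act_congruence C actC"
          "act_congruence B actB" restrict_congruence induced_congruence,
        OF _ _ act_congruence_restrict act_congruence_induced
          _ _ act_congruence_eq_if_traces_eq])
      (auto simp: restrict_congruence_def induced_congruence_def rees_join_def)
qed

lemma act_noetherian_iff: "act_noetherian B actB \<longleftrightarrow> act_noetherian A actA \<and> act_noetherian C actC"
  unfolding act_noetherian_def
proof (intro iffI conjI)
  assume B: "acc_on (act_congruence B actB)"
  show "acc_on (act_congruence A actA)"
    by (rule acc_on_transfer[OF B act_congruence_image_inj[OF right_act_B hom_f inj_f]
          _ extend_f_inj_on_congruences])
      auto
  show "acc_on (act_congruence C actC)"
    by (rule acc_on_transfer[OF B act_congruence_inv_image[OF right_act_B hom_g]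
          _ vimage_g_inj_on_congruences])
      auto
next
  assume "acc_on (act_congruence A actA) \<and> acc_on (act_congruence C actC)"
  then show "acc_on (act_congruence B actB)"
    by (elim conjE acc_on_pair[of "act_congruence A actA" "act_congruence C actC"
          "act_congruence B actB" restrict_congruence induced_congruence,
        OF _ _ act_congruence_restrict act_congruence_induced
          _ _ act_congruence_eq_if_traces_eq])
      (auto simp: restrict_congruence_def induced_congruence_def rees_join_def)
qed

end

theorem mainTheorem5:
  fixes A :: "'a set" and actA :: "'a \<Rightarrow> 's::monoid_mult \<Rightarrow> 'a"
    and B :: "'b set" and actB :: "'b \<Rightarrow> 's \<Rightarrow> 'b"
    and C :: "'c set" and actC :: "'c \<Rightarrow> 's \<Rightarrow> 'c"
    and f :: "'a \<Rightarrow> 'b" and g :: "'b \<Rightarrow> 'c"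
  assumes "right_act A actA" and "right_act B actB" and "right_act C actC"
    and "rees_ses A actA B actB C actC f g"
  shows "(act_artinian B actB \<longleftrightarrow> act_artinian A actA \<and> act_artinian C actC) \<and>
         (act_noetherian B actB \<longleftrightarrow> act_noetherian A actA \<and> act_noetherian C actC) \<and>
         (rees_artinian B actB \<longleftrightarrow> rees_artinian A actA \<and> rees_artinian C actC) \<and>
         (rees_noetherian B actB \<longleftrightarrow> rees_noetherian A actA \<and> rees_noetherian C actC)"
proof -
  interpret rees_exact A actA B actB C actC f g
    using assms(1,2,4) by unfold_locales
  show ?thesis
    using act_artinian_iff act_noetherian_iff rees_artinian_iff rees_noetherian_iff by blast
qed

end
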